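(* Let $\Sigma=\Sigma^{(1)}\sqcup\Sigma^{(2)}$ be a finite set and $\Sigma^+:=\Sigma\sqcup\{*\}$. Let $C$ be a unital commutative $C^*$-algebra generated by positive elements $h_\sigma$, $\sigma\in\Sigma^+$, with $\sum_{\sigma\in\Sigma^+}h_\sigma=\mathbf{1}_C$, and let $h:\mathbb{C}^{\Sigma^+}\to C$ be the unital c.p. map $e_\sigma\mapsto h_\sigma$. Let $K$ be the simplicial complex with vertex set $\Sigma^+$ whose faces are the one-point subsets of $\Sigma^+$ together with the sets $\{\sigma_0,\dots,\sigma_l\}$ of distinct elements with $h_{\sigma_0}\cdots h_{\sigma_l}\neq 0$, let $\bar h_\nu\in C(|K|)$, $\nu\in\Sigma^+$, be its coordinate functions, and let $J:=K\cap\Delta^{\Sigma^{(1)}}$ be the subcomplex of faces of $K$ contained in $\Sigma^{(1)}$. Suppose that $h_{\sigma_0}\cdots h_{\sigma_{n+1}}=0$ for any distinct $\sigma_0,\dots,\sigma_{n+1}\in\Sigma$, and that $h|_{\mathbb{C}^{\Sigma^{(1)}}}$ is $n$-decomposable. Then there is a finite simplicial complex $\mathrm{Sd}_J K$ with vertex set $\Gamma$ such that: (i) $\Sigma^+\subset\Gamma\subset\{\text{faces of }K\}$ (identifying $\sigma\in\Sigma^+$ with the face $\{\sigma\}$), and every $\gamma\in\Gamma\setminus\Sigma^+$, regarded as a face of $K$, intersects $\Sigma^{(2)}$; (ii) the map $\beta:\Gamma\to|K|$ sending each $\gamma$ to the barycenter $\sum_{\nu\in\gamma}\frac{1}{\operatorname{card}\gamma}|\nu|$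 of the corresponding face of $|K|$ induces a linear homeomorphism $\bar\beta:|\mathrm{Sd}_J K|\to|K|$; (iii) $\mathrm{Sd}_J K\cap\Delta^{\Sigma^{(1)}}=J$ (so $|J|\subset|\mathrm{Sd}_J K|$ and $\bar\beta|_{|J|}=\mathrm{id}_{|J|}$); (iv) the coordinate functions $\bar k_\gamma\in C(|\mathrm{Sd}_J K|)$, $\gamma\in\Gamma$, define a unital c.p. map $\bar k:\mathbb{C}^\Gamma\to C(|\mathrm{Sd}_J K|)$ whose restriction to $\mathbb{C}^{\Gamma\setminus\{*\}}$ is $n$-decomposable, with $\bar k_\gamma(t)=\bar h_\gamma\circ\bar\beta(t)$ for all $\gamma\in\Sigma^{(1)}$ and $t\in|J|$, and moreover $\sum_{\gamma\in\Gamma\setminus\{*\}}\bar k_\gamma=\sum_{\sigma\in\Sigma}\bar h_\sigma\circ\bar\beta$.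
   Context: A finite simplicial complex $K$ is a collection of subsets (faces) of a finite vertex set $V(K)$ such that subsets of faces are faces and $\{\nu\}\in K$ for every $\nu\in V(K)$. For a set $M$, $\Delta^M$ is the full simplex (all subsets of $M$), and $K\cap\Delta^M$ is the subcomplex of faces of $K$ contained in $M$. The geometric realization is $|K|:=\{t\in[0,1]^{V(K)}:\sum_\nu t_\nu=1,\ \{\nu:t_\nu\neq0\}\in K\}$, with vertices $|\nu|$ (the point with $t_\nu=1$); a subcomplex $K'$ is identified with the subspace $|K'|\subset|K|$ of points with coordinates vanishing outside $V(K')$. The coordinate functions are $\bar h_\nu(t)=t_\nu$. If $\tau:V(K)\to|L|$ is a map such that for every face $\kappa$ of $K$ all convex combinations of $\{\tau(\nu):\nu\in\kappa\}$ lie in $|L|$, the induced linear map $\bar\tau:|K|\to|L|$ is $\bar\tau(t)=\sum_\nu t_\nu\tau(\nu)$. A c.p. map $\phi:\mathbb{C}^M\to D$ into a commutative $C^*$-algebra is $n$-decomposable if there is a partition $M=\coprod_{j=0}^n I_j$ such that $\phi(e_m)\phi(e_{m'})=0$ whenever $m\neq m'$ lie in the same $I_j$. *)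

theory Defs
  imports "HOL-Analysis.Analysis"
begin

definition fin_simplicial_complex :: "'v set \<Rightarrow> 'v set set \<Rightarrow> bool" where
  "fin_simplicial_complex V L \<longleftrightarrow>
     finite V \<and> (\<forall>F\<in>L. F \<subseteq> V) \<and> (\<forall>F\<in>L. \<forall>G. G \<subseteq> F \<longrightarrow> G \<in> L)
     \<and> (\<forall>v\<in>V. {v} \<in> L)"

text \<open>Geometric realization |L| as points of [0,1]^V (extended by 0 outside V),
  with the product topology on functions.\<close>
definition georeal :: "'v set \<Rightarrow> 'v set set \<Rightarrow> ('v \<Rightarrow> real) set" where
  "georeal V L = {t. (\<forall>v. 0 \<le> t v \<and> t v \<le> 1) \<and> (\<forall>v. v \<notin> V \<longrightarrow> t v = 0)
                    \<and> (\<Sum>v\<in>V. t v) = 1 \<and> {v\<in>V. t v \<noteq> 0} \<in> L}"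

definition vertex_pt :: "'v \<Rightarrow> ('v \<Rightarrow> real)" where
  "vertex_pt \<nu> = (\<lambda>w. if w = \<nu> then 1 else 0)"

definition lin_ext :: "'v set \<Rightarrow> ('v \<Rightarrow> ('w \<Rightarrow> real)) \<Rightarrow> ('v \<Rightarrow> real) \<Rightarrow> ('w \<Rightarrow> real)" where
  "lin_ext V \<tau> t = (\<lambda>w. \<Sum>v\<in>V. t v * \<tau> v w)"

definition barycenter :: "'a set \<Rightarrow> ('a \<Rightarrow> real)" where
  "barycenter \<gamma> = (\<lambda>w. \<Sum>\<nu>\<in>\<gamma>. (1 / real (card \<gamma>)) * vertex_pt \<nu> w)"

definition nerve_cx :: "'a set \<Rightarrow> ('a \<Rightarrow> 'x \<Rightarrow> real) \<Rightarrow> 'x set \<Rightarrow> 'a set set" where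
  "nerve_cx S h X = {F. F \<subseteq> S \<and> (F = {} \<or> card F = 1 \<or>
                         (finite F \<and> F \<noteq> {} \<and> (\<exists>x\<in>X. (\<Prod>\<sigma>\<in>F. h \<sigma> x) \<noteq> 0)))}"

text \<open>n-decomposability of the c.p. map e_m \<mapsto> f m (m in M) into functions on Y
  (a commutative C*-algebra): a partition of M into n+1 classes I_0..I_n, given
  by a colouring, with f m * f m' = 0 for distinct m, m' of the same class.\<close>
definition n_decomposable :: "nat \<Rightarrow> 'm set \<Rightarrow> ('m \<Rightarrow> 'y \<Rightarrow> real) \<Rightarrow> 'y set \<Rightarrow> bool" where
  "n_decomposable n M f Y \<longleftrightarrow>
     (\<exists>c :: 'm \<Rightarrow> nat. (\<forall>m\<in>M. c m \<le> n) \<and>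
        (\<forall>m\<in>M. \<forall>m'\<in>M. m \<noteq> m' \<and> c m = c m' \<longrightarrow> (\<forall>y\<in>Y. f m y * f m' y = 0)))"

end

theory Submission
  imports Defs
begin

text \<open>
  The subdivision stars exactly the \<^emph>\<open>split faces\<close> of \<open>K\<close>: faces inside \<open>\<Sigma>\<close> that meet \<open>\<Sigma>2\<close>
  and are large compared with the colours of their \<open>\<Sigma>1\<close>-vertices. These faces are closed under
  unions inside faces of \<open>K\<close>, so every face \<open>D\<close> has a largest split subface. Peeling off the
  weight of this top face and inducting on the support shows that the barycentric map is a
  mass-preserving bijection between the cones over \<open>|Sd\<^sub>J K|\<close> and \<open>|K|\<close>; by compactness it is a
  homeomorphism. No split face lies in \<open>\<Sigma>1\<close>, so \<open>J\<close> is untouched.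

  For decomposability a split face \<open>\<gamma>\<close> gets colour \<open>card \<gamma> - 1\<close>, a vertex in \<open>\<Sigma>1\<close> keeps its colour
  from the decomposition of \<open>h\<close>, and a vertex in \<open>\<Sigma>2\<close> gets colour 0. The split faces of a simplex
  form a chain, so their sizes differ, and any other colour clash would exhibit a split face that
  the simplex may not contain.
\<close>

lemma fin_simplicial_complexD:
  assumes "fin_simplicial_complex V L"
  shows "finite V" and "F \<in> L \<Longrightarrow> F \<subseteq> V" and "F \<in> L \<Longrightarrow> G \<subseteq> F \<Longrightarrow> G \<in> L"
    and "v \<in> V \<Longrightarrow> {v} \<in> L"
  using assms unfolding fin_simplicial_complex_def by blast+

lemma finite_fin_simplicial_complex: "fin_simplicial_complex V L \<Longrightarrow> finite L"
  by (metis Pow_iff finite_Pow_iff finite_subset fin_simplicial_complexD(1,2) subsetI)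

lemma georeal_eq_UN_closed_faces:
  assumes L: "fin_simplicial_complex V L"
  shows "georeal V L = (\<Union>F\<in>L. {t. (\<forall>v. 0 \<le> t v \<and> t v \<le> 1) \<and> (\<forall>v\<in>-F. t v = 0) \<and> sum t V = 1})"
    (is "_ = (\<Union>F\<in>L. ?face F)")
proof (intro subset_antisym subsetI)
  fix t assume t: "t \<in> georeal V L"
  then have "t \<in> ?face {v\<in>V. t v \<noteq> 0}"
    unfolding georeal_def by auto
  with t show "t \<in> (\<Union>F\<in>L. ?face F)"
    unfolding georeal_def by blast
next
  fix t assume "t \<in> (\<Union>F\<in>L. ?face F)"
  then obtain F where F: "F \<in> L" "t \<in> ?face F" by blast
  have "F \<subseteq> V"
    using F(1) L by (simp add: fin_simplicial_complexD)
  have "{v\<in>V. t v \<noteq> 0} \<subseteq> F"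
    using F(2) by blast
  with F(1) L have "{v\<in>V. t v \<noteq> 0} \<in> L"
    by (simp add: fin_simplicial_complexD)
  with F(2) \<open>F \<subseteq> V\<close> show "t \<in> georeal V L"
    unfolding georeal_def by blast
qed

lemma compact_georeal:
  fixes V :: "'v set"
  assumes L: "fin_simplicial_complex V L"
  shows "compact (georeal V L)"
proof -
  have "compact (PiE UNIV (\<lambda>_. {0..1}) :: ('v \<Rightarrow> real) set)"
    using compactin_PiE[of "\<lambda>_. euclidean" UNIV "\<lambda>_. {0..1::real}"]
    by (simp add: euclidean_product_topology)
  moreover have "closed (\<Inter>v\<in>-F. {t :: 'v \<Rightarrow> real. t v = 0})" for F
    by (intro closed_INT ballI closed_Collect_eq continuous_on_product_coordinates continuous_on_const)
  moreover have "closed {t :: 'v \<Rightarrow> real. sum t V = 1}"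
    by (intro closed_Collect_eq continuous_on_sum continuous_on_product_coordinates continuous_on_const)
  ultimately have "compact (PiE UNIV (\<lambda>_. {0..1::real}) \<inter> (\<Inter>v\<in>-F. {t. t v = 0}) \<inter> {t. sum t V = 1})" for F
    by (intro compact_Int_closed) auto
  moreover have "PiE UNIV (\<lambda>_. {0..1::real}) \<inter> (\<Inter>v\<in>-F. {t. t v = 0}) \<inter> {t. sum t V = 1}
      = {t. (\<forall>v. 0 \<le> t v \<and> t v \<le> 1) \<and> (\<forall>v\<in>-F. t v = 0) \<and> sum t V = 1}" for F
    by (auto simp: PiE_UNIV_domain Pi_iff)
  ultimately show ?thesis
    unfolding georeal_eq_UN_closed_faces[OF L]
    using finite_fin_simplicial_complex[OF L] by (intro compact_UN) auto
qed

definition realization_cone :: "'v set \<Rightarrow> 'v set set \<Rightarrow> ('v \<Rightarrow> real) set" where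
  "realization_cone V L = {t. (\<forall>v. 0 \<le> t v) \<and> (\<forall>v. v \<notin> V \<longrightarrow> t v = 0) \<and> support_on V t \<in> L}"

lemma georeal_eq_cone:
  assumes "finite V"
  shows "georeal V L = {t \<in> realization_cone V L. sum t V = 1}"
proof -
  have "t v \<le> 1" if "t \<in> realization_cone V L" "sum t V = 1" for t v
  proof (cases "v \<in> V")
    case True
    then have "t v \<le> sum t V"
      using that(1) assms by (intro member_le_sum) (auto simp: realization_cone_def)
    then show ?thesis using that(2) by simp
  qed (use that in \<open>auto simp: realization_cone_def\<close>)
  then show ?thesis
    unfolding georeal_def realization_cone_def support_on_def by blast
qed

lemma Hausdorff_space_euclidean_fun: "Hausdorff_space (euclidean :: ('a \<Rightarrow> 'b::metric_space) topology)"
proof -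
  have "Hausdorff_space (product_topology (\<lambda>_::'a. euclidean :: 'b topology) UNIV)"
    by (simp add: Hausdorff_space_product_topology)
  then show ?thesis
    by (simp add: euclidean_product_topology)
qed

text \<open>A variant of \<open>homeomorphism_compact\<close>, which needs a \<open>t2_space\<close> codomain; function spaces
  are not an instance of that class.\<close>

lemma homeomorphism_compact_Hausdorff:
  fixes f :: "'a::topological_space \<Rightarrow> 'b::topological_space"
  assumes "Hausdorff_space (euclidean :: 'b topology)"
    and "compact S" "continuous_on S f" "f ` S = T" "inj_on f S"
  shows "\<exists>g. homeomorphism S T f g"
proof
  let ?g = "the_inv_into S f"
  have "continuous_map (top_of_set (f ` S)) (top_of_set S) ?g"
  proof (rule continuous_inverse_map)
    show "compact_space (top_of_set S)"
      using \<open>compact S\<close> by (simp add: compact_space_subtopology compactin_euclidean_iff)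
    show "continuous_map (top_of_set S) euclidean f"
      using \<open>continuous_on S f\<close> by simp
    show "?g (f x) = x" if "x \<in> topspace (top_of_set S)" for x
      using that \<open>inj_on f S\<close> by (simp add: the_inv_into_f_f)
  qed (use assms(1) in auto)
  then have "continuous_on T ?g"
    using assms(4) by (simp add: continuous_map_subtopology_eu)
  then show "homeomorphism S T f ?g"
    using assms by (auto simp: homeomorphism_def the_inv_into_f_f f_the_inv_into_f the_inv_into_onto)
qed

lemma continuous_on_lin_ext: "continuous_on A (lin_ext V \<tau>)"
proof (rule continuous_on_subset[OF _ subset_UNIV])
  show "continuous_on UNIV (lin_ext V \<tau>)"
    unfolding lin_ext_def
    by (intro continuous_on_coordinatewise_then_product continuous_on_sum continuous_on_mult_right
        continuous_on_product_coordinates)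
qed

lemma homeomorphism_georeal_if_bij_betw_cones:
  assumes L: "fin_simplicial_complex V L" and "finite W"
    and bij: "bij_betw f (realization_cone V L) (realization_cone W M)"
    and mass: "\<And>t. t \<in> realization_cone V L \<Longrightarrow> sum (f t) W = sum t V"
    and cont: "continuous_on (georeal V L) f"
  shows "\<exists>g. homeomorphism (georeal V L) (georeal W M) f g"
proof (rule homeomorphism_compact_Hausdorff[OF Hausdorff_space_euclidean_fun compact_georeal[OF L] cont])
  have "finite V" using L by (rule fin_simplicial_complexD)
  have image: "f ` realization_cone V L = realization_cone W M"
    using bij by (rule bij_betw_imp_surj_on)
  have "f ` {t \<in> realization_cone V L. sum t V = 1} = {x \<in> realization_cone W M. sum x W = 1}"
  proof (intro subset_antisym subsetI)
    fix x assume "x \<in> f ` {t \<in> realization_cone V L. sum t V = 1}"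
    then show "x \<in> {x \<in> realization_cone W M. sum x W = 1}"
      using image mass by auto
  next
    fix x assume x: "x \<in> {x \<in> realization_cone W M. sum x W = 1}"
    then obtain t where "t \<in> realization_cone V L" "x = f t"
      using image by (metis (no_types, lifting) imageE mem_Collect_eq)
    with x mass show "x \<in> f ` {t \<in> realization_cone V L. sum t V = 1}"
      by auto
  qed
  then show "f ` georeal V L = georeal W M"
    using \<open>finite V\<close> \<open>finite W\<close> by (simp add: georeal_eq_cone)
  show "inj_on f (georeal V L)"
    using bij_betw_imp_inj_on[OF bij] by (rule inj_on_subset)
      (simp add: georeal_eq_cone \<open>finite V\<close>)
qed

lemma barycenter_apply:
  assumes "finite \<gamma>"
  shows "barycenter \<gamma> w = (if w \<in> \<gamma> then 1 / real (card \<gamma>) else 0)"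
proof -
  have "barycenter \<gamma> w = (1 / real (card \<gamma>)) * (\<Sum>\<nu>\<in>\<gamma>. if w = \<nu> then 1 else 0)"
    unfolding barycenter_def vertex_pt_def by (simp add: sum_distrib_left)
  with assms show ?thesis
    by (simp add: sum.delta)
qed

text \<open>The partial barycentric subdivision of \<open>K\<close> in which exactly the faces in \<open>S\<close> get their
  barycentres as new vertices. Closure of \<open>S\<close> under unions inside faces makes \<open>top_face D\<close>
  the largest member of \<open>S\<close> contained in \<open>D\<close>.\<close>

locale partial_subdivision =
  fixes V :: "'a set" and K :: "'a set set" and S :: "'a set set"
  assumes complex: "fin_simplicial_complex V K"
    and S_subset: "S \<subseteq> K"
    and two_le_card_S: "\<delta> \<in> S \<Longrightarrow> 2 \<le> card \<delta>"
    and S_Un: "\<delta> \<in> S \<Longrightarrow> \<delta>' \<in> S \<Longrightarrow> \<delta> \<union> \<delta>' \<in> K \<Longrightarrow> \<delta> \<union> \<delta>' \<in> S"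
begin

lemmas finite_V = fin_simplicial_complexD(1)[OF complex]
  and K_subset = fin_simplicial_complexD(2)[OF complex]
  and K_downward = fin_simplicial_complexD(3)[OF complex]
  and singleton_K = fin_simplicial_complexD(4)[OF complex]

lemma finite_K: "F \<in> K \<Longrightarrow> finite F"
  using K_subset finite_V by (rule finite_subset)

lemma S_in_K: "\<delta> \<in> S \<Longrightarrow> \<delta> \<in> K"
  using S_subset by blast

lemma finite_in_S: "\<delta> \<in> S \<Longrightarrow> finite \<delta>"
  by (simp add: S_in_K finite_K)

lemma S_subset_V: "\<delta> \<in> S \<Longrightarrow> \<delta> \<subseteq> V"
  by (simp add: S_in_K K_subset)

lemma finite_S: "finite S"
proof -
  have "S \<subseteq> Pow V" using S_subset_V by blast
  then show ?thesis
    using finite_V by (simp add: finite_subset)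
qed

lemma S_not_subset_singleton:
  assumes "\<delta> \<in> S"
  shows "\<not> \<delta> \<subseteq> {v}"
proof
  assume "\<delta> \<subseteq> {v}"
  then have "card \<delta> \<le> 1"
    using card_mono[of "{v}" \<delta>] by simp
  with two_le_card_S[OF assms] show False by simp
qed

lemma singleton_notin_S: "{v} \<notin> S"
  using S_not_subset_singleton[of "{v}" v] by auto

definition top_face :: "'a set \<Rightarrow> 'a set" where
  "top_face D = \<Union>{\<delta> \<in> S. \<delta> \<subseteq> D}"

lemma top_face_subset: "top_face D \<subseteq> D"
  unfolding top_face_def by blast

lemma subset_top_face: "\<delta> \<in> S \<Longrightarrow> \<delta> \<subseteq> D \<Longrightarrow> \<delta> \<subseteq> top_face D"
  unfolding top_face_def by blast

lemma top_face_mono: "D \<subseteq> D' \<Longrightarrow> top_face D \<subseteq> top_face D'"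
  unfolding top_face_def by blast

lemma Union_in_S:
  assumes "finite \<F>" "\<F> \<noteq> {}" "\<F> \<subseteq> S" "\<Union>\<F> \<in> K"
  shows "\<Union>\<F> \<in> S"
  using assms
proof (induction \<F> rule: finite_ne_induct)
  case (insert \<delta> \<F>)
  have "\<Union>\<F> \<subseteq> \<Union>(insert \<delta> \<F>)" by blast
  with insert.prems(2) have "\<Union>\<F> \<in> K"
    by (rule K_downward)
  with insert.prems(1) insert.IH have "\<Union>\<F> \<in> S"
    by simp
  with insert.prems show ?case
    by (simp add: S_Un)
qed simp

lemma top_face_in_S:
  assumes "D \<in> K" "\<delta> \<in> S" "\<delta> \<subseteq> D"
  shows "top_face D \<in> S"
  unfolding top_face_def
proof (rule Union_in_S)
  have "{\<delta> \<in> S. \<delta> \<subseteq> D} \<subseteq> Pow D" by blast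
  then show "finite {\<delta> \<in> S. \<delta> \<subseteq> D}"
    using finite_K[OF \<open>D \<in> K\<close>] by (simp add: finite_subset)
  show "\<Union>{\<delta> \<in> S. \<delta> \<subseteq> D} \<in> K"
    by (rule K_downward[OF assms(1)]) blast
  show "{\<delta> \<in> S. \<delta> \<subseteq> D} \<noteq> {}"
    using assms(2,3) by blast
qed blast

definition sd_vertices :: "'a set set" where
  "sd_vertices = (\<lambda>v. {v}) ` V \<union> S"

definition sd_face :: "'a set \<Rightarrow> 'a set set \<Rightarrow> bool" where
  "sd_face \<tau> C \<longleftrightarrow> \<tau> \<subseteq> V \<and> subset.chain S C \<and> \<tau> \<union> \<Union>C \<in> K \<and> (\<forall>\<delta>\<in>S. \<not> \<delta> \<subseteq> \<tau>)
     \<and> (\<forall>\<gamma>\<in>C. top_face (\<tau> \<union> \<gamma>) = \<gamma>)"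

definition sd_complex :: "'a set set set" where
  "sd_complex = {(\<lambda>v. {v}) ` \<tau> \<union> C | \<tau> C. sd_face \<tau> C}"

lemma sd_faceD:
  assumes "sd_face \<tau> C"
  shows "\<tau> \<subseteq> V" and "C \<subseteq> S" and "\<gamma> \<in> C \<Longrightarrow> \<gamma>' \<in> C \<Longrightarrow> \<gamma> \<subseteq> \<gamma>' \<or> \<gamma>' \<subseteq> \<gamma>"
    and "\<tau> \<union> \<Union>C \<in> K" and "\<delta> \<in> S \<Longrightarrow> \<not> \<delta> \<subseteq> \<tau>"
    and "\<gamma> \<in> C \<Longrightarrow> top_face (\<tau> \<union> \<gamma>) = \<gamma>"
  using assms unfolding sd_face_def subset_chain_def by simp_all

lemma sd_face_top_face:
  assumes "sd_face \<tau> C" "\<gamma> \<in> C" "\<delta> \<in> S" "\<delta> \<subseteq> \<tau> \<union> \<gamma>"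
  shows "\<delta> \<subseteq> \<gamma>"
  using subset_top_face[OF assms(3,4)] sd_faceD(6)[OF assms(1,2)] by simp

lemma sd_complexE:
  assumes "F \<in> sd_complex"
  obtains \<tau> C where "sd_face \<tau> C" "F = (\<lambda>v. {v}) ` \<tau> \<union> C"
  using assms unfolding sd_complex_def by blast

lemma sd_complex_subset:
  assumes "F \<in> sd_complex"
  shows "F \<subseteq> sd_vertices"
proof -
  obtain \<tau> C where "sd_face \<tau> C" "F = (\<lambda>v. {v}) ` \<tau> \<union> C"
    using assms by (rule sd_complexE)
  with sd_faceD(1,2) show ?thesis
    unfolding sd_vertices_def by blast
qed

lemma sd_face_subset:
  assumes "sd_face \<tau> C" "\<tau>' \<subseteq> \<tau>" "C' \<subseteq> C"
  shows "sd_face \<tau>' C'"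
  unfolding sd_face_def
proof (intro conjI ballI)
  show "\<tau>' \<subseteq> V"
    using assms(2) sd_faceD(1)[OF assms(1)] by blast
  show "\<not> \<delta> \<subseteq> \<tau>'" if "\<delta> \<in> S" for \<delta>
    using assms(2) sd_faceD(5)[OF assms(1) that] by blast
  show "subset.chain S C'"
    using sd_faceD(2,3)[OF assms(1)] assms(3) unfolding subset_chain_def by blast
  show "\<tau>' \<union> \<Union>C' \<in> K"
    by (rule K_downward[OF sd_faceD(4)[OF assms(1)]]) (use assms(2,3) in blast)
  fix \<gamma> assume "\<gamma> \<in> C'"
  then have \<gamma>: "\<gamma> \<in> C" "\<gamma> \<in> S"
    using assms(3) sd_faceD(2)[OF assms(1)] by blast+
  have "top_face (\<tau>' \<union> \<gamma>) \<subseteq> top_face (\<tau> \<union> \<gamma>)"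
    using assms(2) by (intro top_face_mono) blast
  also have "\<dots> = \<gamma>"
    using assms(1) \<gamma>(1) by (rule sd_faceD(6))
  finally show "top_face (\<tau>' \<union> \<gamma>) = \<gamma>"
    using subset_top_face[OF \<gamma>(2), of "\<tau>' \<union> \<gamma>"] by blast
qed

lemma sd_complex_downward:
  assumes "F \<in> sd_complex" "G \<subseteq> F"
  shows "G \<in> sd_complex"
proof -
  obtain \<tau> C where face: "sd_face \<tau> C" and F: "F = (\<lambda>v. {v}) ` \<tau> \<union> C"
    using assms(1) by (rule sd_complexE)
  have "G = (\<lambda>v. {v}) ` {v \<in> \<tau>. {v} \<in> G} \<union> (C \<inter> G)"
    using assms(2) F by blast
  moreover have "sd_face {v \<in> \<tau>. {v} \<in> G} (C \<inter> G)"
    using face by (rule sd_face_subset) auto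
  ultimately show ?thesis
    unfolding sd_complex_def by blast
qed

lemma singleton_sd_complex:
  assumes "\<gamma> \<in> sd_vertices"
  shows "{\<gamma>} \<in> sd_complex"
proof (cases "\<gamma> \<in> S")
  case True
  then have "top_face \<gamma> = \<gamma>"
    using subset_top_face top_face_subset by blast
  with True have "sd_face {} {\<gamma>}"
    unfolding sd_face_def subset_chain_def using S_not_subset_singleton by (auto simp: S_in_K)
  then have "(\<lambda>v. {v}) ` {} \<union> {\<gamma>} \<in> sd_complex"
    unfolding sd_complex_def by blast
  then show ?thesis by simp
next
  case False
  then obtain v where v: "v \<in> V" "\<gamma> = {v}"
    using assms unfolding sd_vertices_def by blast
  then have "sd_face {v} {}"
    unfolding sd_face_def subset_chain_def using singleton_K S_not_subset_singleton by simp
  then have "(\<lambda>v. {v}) ` {v} \<union> {} \<in> sd_complex"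
    unfolding sd_complex_def by blast
  with v show ?thesis by simp
qed

lemma finite_sd_vertices: "finite sd_vertices"
  unfolding sd_vertices_def using finite_V finite_S by simp

lemma fin_simplicial_complex_sd: "fin_simplicial_complex sd_vertices sd_complex"
  unfolding fin_simplicial_complex_def
  by (intro conjI ballI allI impI finite_sd_vertices singleton_sd_complex)
    (auto intro: sd_complex_downward dest: sd_complex_subset)

lemma S_subset_sd_vertices: "S \<subseteq> sd_vertices"
  unfolding sd_vertices_def by blast

lemma sd_vertex_subset_V: "\<gamma> \<in> sd_vertices \<Longrightarrow> \<gamma> \<subseteq> V"
  unfolding sd_vertices_def using S_subset_V by blast

lemma card_sd_vertex_pos: "\<gamma> \<in> sd_vertices \<Longrightarrow> 0 < card \<gamma>"
  unfolding sd_vertices_def using two_le_card_S by (auto intro: less_le_trans[of 0 2])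

lemma finite_sd_vertex: "\<gamma> \<in> sd_vertices \<Longrightarrow> finite \<gamma>"
  using card_sd_vertex_pos card_ge_0_finite by blast

abbreviation bary :: "('a set \<Rightarrow> real) \<Rightarrow> 'a \<Rightarrow> real" where
  "bary \<equiv> lin_ext sd_vertices barycenter"

abbreviation sd_cone :: "('a set \<Rightarrow> real) set" where
  "sd_cone \<equiv> realization_cone sd_vertices sd_complex"

lemma bary_apply: "bary t w = (\<Sum>\<gamma>\<in>sd_vertices. if w \<in> \<gamma> then t \<gamma> / real (card \<gamma>) else 0)"
  unfolding lin_ext_def by (intro sum.cong refl) (simp add: barycenter_apply finite_sd_vertex)

lemma bary_nonneg: "(\<And>\<gamma>. 0 \<le> t \<gamma>) \<Longrightarrow> 0 \<le> bary t w"
  unfolding bary_apply by (intro sum_nonneg) auto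

lemma bary_eq_0_outside: "w \<notin> V \<Longrightarrow> bary t w = 0"
  unfolding bary_apply using sd_vertex_subset_V by (intro sum.neutral) auto

lemma bary_eq_0_iff:
  assumes "\<And>\<gamma>. 0 \<le> t \<gamma>"
  shows "bary t w = 0 \<longleftrightarrow> (\<forall>\<gamma>\<in>sd_vertices. t \<gamma> = 0 \<or> w \<notin> \<gamma>)"
proof -
  have "bary t w = 0 \<longleftrightarrow> (\<forall>\<gamma>\<in>sd_vertices. (if w \<in> \<gamma> then t \<gamma> / real (card \<gamma>) else 0) = 0)"
    unfolding bary_apply using assms finite_sd_vertices by (intro sum_nonneg_eq_0_iff) auto
  also have "\<dots> \<longleftrightarrow> (\<forall>\<gamma>\<in>sd_vertices. t \<gamma> = 0 \<or> w \<notin> \<gamma>)"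
  proof (intro ball_cong refl)
    fix \<gamma> assume "\<gamma> \<in> sd_vertices"
    then show "((if w \<in> \<gamma> then t \<gamma> / real (card \<gamma>) else 0) = 0) \<longleftrightarrow> (t \<gamma> = 0 \<or> w \<notin> \<gamma>)"
      using card_sd_vertex_pos[of \<gamma>] by auto
  qed
  finally show ?thesis .
qed

lemma support_bary:
  assumes "\<And>\<gamma>. 0 \<le> t \<gamma>"
  shows "support_on V (bary t) = \<Union>(support_on sd_vertices t)"
  using bary_eq_0_iff[of t, OF assms] sd_vertex_subset_V by (auto simp: support_on_def)

lemma sum_bary:
  assumes "finite A"
  shows "sum (bary t) A = (\<Sum>\<gamma>\<in>sd_vertices. t \<gamma> * real (card (A \<inter> \<gamma>)) / real (card \<gamma>))"
proof -
  have "sum (bary t) A = (\<Sum>\<gamma>\<in>sd_vertices. \<Sum>w\<in>A. if w \<in> \<gamma> then t \<gamma> / real (card \<gamma>) else 0)"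
    unfolding bary_apply by (rule sum.swap)
  also have "\<dots> = (\<Sum>\<gamma>\<in>sd_vertices. t \<gamma> * real (card (A \<inter> \<gamma>)) / real (card \<gamma>))"
    using assms by (intro sum.cong refl) (simp add: sum.If_cases Int_def)
  finally show ?thesis .
qed

lemma sum_bary_V: "sum (bary t) V = sum t sd_vertices"
  unfolding sum_bary[OF finite_V]
  using sd_vertex_subset_V card_sd_vertex_pos by (intro sum.cong refl) (simp add: Int_absorb1)

lemma bary_at_private_point:
  assumes "\<gamma> \<in> sd_vertices" "w \<in> \<gamma>" "\<And>\<gamma>'. \<gamma>' \<in> sd_vertices \<Longrightarrow> \<gamma>' \<noteq> \<gamma> \<Longrightarrow> t \<gamma>' = 0 \<or> w \<notin> \<gamma>'"
  shows "bary t w = t \<gamma> / real (card \<gamma>)"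
proof -
  have "bary t w = (\<Sum>\<gamma>'\<in>sd_vertices. if \<gamma>' = \<gamma> then t \<gamma> / real (card \<gamma>) else 0)"
    unfolding bary_apply using assms by (intro sum.cong refl) auto
  with assms(1) finite_sd_vertices show ?thesis
    by simp
qed

lemma bary_lower_bound:
  assumes "\<And>\<gamma>. 0 \<le> t \<gamma>" "\<gamma> \<in> sd_vertices" "w \<in> \<gamma>"
  shows "t \<gamma> / real (card \<gamma>) \<le> bary t w"
proof -
  have "(if w \<in> \<gamma> then t \<gamma> / real (card \<gamma>) else 0) \<le> bary t w"
    unfolding bary_apply using assms finite_sd_vertices by (intro member_le_sum) auto
  with assms(3) show ?thesis by simp
qed

lemma bary_fun_upd:
  assumes "\<gamma> \<in> sd_vertices"
  shows "bary (t(\<gamma> := s)) w = bary t w + (if w \<in> \<gamma> then (s - t \<gamma>) / real (card \<gamma>) else 0)"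
proof -
  let ?b = "\<lambda>t \<gamma>'. if w \<in> \<gamma>' then t / real (card \<gamma>') else 0"
  have "bary (t(\<gamma> := s)) w = (\<Sum>\<gamma>'\<in>sd_vertices. ?b (t \<gamma>') \<gamma>' + (if \<gamma>' = \<gamma> then ?b (s - t \<gamma>) \<gamma> else 0))"
    unfolding bary_apply by (intro sum.cong refl) (auto simp: diff_divide_distrib)
  also have "\<dots> = bary t w + ?b (s - t \<gamma>) \<gamma>"
    unfolding bary_apply sum.distrib using assms finite_sd_vertices by simp
  finally show ?thesis .
qed

lemma sd_coneD:
  assumes "t \<in> sd_cone"
  shows "0 \<le> t \<gamma>" and "\<gamma> \<notin> sd_vertices \<Longrightarrow> t \<gamma> = 0" and "support_on sd_vertices t \<in> sd_complex"
  using assms unfolding realization_cone_def by auto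

lemma sd_coneE:
  assumes "t \<in> sd_cone"
  obtains \<tau> C where "sd_face \<tau> C" "support_on sd_vertices t = (\<lambda>v. {v}) ` \<tau> \<union> C"
  using sd_coneD(3)[OF assms] by (rule sd_complexE)

lemma support_bary_sd_face:
  assumes "t \<in> sd_cone" "support_on sd_vertices t = (\<lambda>v. {v}) ` \<tau> \<union> C"
  shows "support_on V (bary t) = \<tau> \<union> \<Union>C"
  using support_bary[of t, OF sd_coneD(1)[OF assms(1)]] assms(2) by auto

lemma bary_in_cone:
  assumes "t \<in> sd_cone"
  shows "bary t \<in> realization_cone V K"
proof -
  obtain \<tau> C where "sd_face \<tau> C" "support_on sd_vertices t = (\<lambda>v. {v}) ` \<tau> \<union> C"
    using assms by (rule sd_coneE)
  then have "support_on V (bary t) \<in> K"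
    using support_bary_sd_face[OF assms] sd_faceD(4) by simp
  then show ?thesis
    unfolding realization_cone_def
    using bary_nonneg[of t] sd_coneD(1)[OF assms] bary_eq_0_outside by auto
qed

lemma fun_upd_zero_in_sd_cone:
  assumes "t \<in> sd_cone"
  shows "t(\<gamma> := 0) \<in> sd_cone"
proof -
  have "support_on sd_vertices (t(\<gamma> := 0)) \<subseteq> support_on sd_vertices t"
    by (auto simp: support_on_def)
  with sd_coneD(3)[OF assms] have "support_on sd_vertices (t(\<gamma> := 0)) \<in> sd_complex"
    by (rule sd_complex_downward)
  with sd_coneD(1,2)[OF assms] show ?thesis
    unfolding realization_cone_def by auto
qed

definition vertex_weights :: "('a \<Rightarrow> real) \<Rightarrow> 'a set \<Rightarrow> real" where
  "vertex_weights x \<gamma> = (if \<gamma> \<in> (\<lambda>v. {v}) ` V then x (the_elem \<gamma>) else 0)"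

lemma bary_vertex_weights: "bary (vertex_weights x) w = (if w \<in> V then x w else 0)"
proof (cases "w \<in> V")
  case True
  then have "bary (vertex_weights x) w = vertex_weights x {w} / real (card {w})"
    by (intro bary_at_private_point) (auto simp: sd_vertices_def vertex_weights_def)
  with True show ?thesis
    by (simp add: vertex_weights_def)
qed (simp add: bary_eq_0_outside)

lemma sd_cone_eq_vertex_weights:
  assumes "t \<in> sd_cone" "\<And>\<delta>. \<delta> \<in> S \<Longrightarrow> \<not> \<delta> \<subseteq> support_on V (bary t)"
  shows "t = vertex_weights (bary t)"
proof
  fix \<gamma>
  obtain \<tau> C where face: "sd_face \<tau> C" and supp: "support_on sd_vertices t = (\<lambda>v. {v}) ` \<tau> \<union> C"
    using assms(1) by (rule sd_coneE)
  have "C = {}"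
    using assms(2) sd_faceD(2)[OF face] support_bary_sd_face[OF assms(1) supp] by blast
  show "t \<gamma> = vertex_weights (bary t) \<gamma>"
  proof (cases "\<gamma> \<in> (\<lambda>v. {v}) ` V")
    case True
    then obtain v where v: "v \<in> V" "\<gamma> = {v}" by blast
    have "bary t v = t {v} / real (card {v})"
    proof (rule bary_at_private_point)
      show "t \<gamma>' = 0 \<or> v \<notin> \<gamma>'" if "\<gamma>' \<in> sd_vertices" "\<gamma>' \<noteq> {v}" for \<gamma>'
      proof (cases "t \<gamma>' = 0")
        case False
        with that(1) supp \<open>C = {}\<close> have "\<gamma>' \<in> (\<lambda>v. {v}) ` \<tau>"
          by (auto simp: support_on_def)
        with that(2) show ?thesis by auto
      qed simp
    qed (use v in \<open>auto simp: sd_vertices_def\<close>)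
    with v show ?thesis
      by (simp add: vertex_weights_def)
  next
    case False
    then have "\<gamma> \<notin> support_on sd_vertices t"
      using supp \<open>C = {}\<close> sd_faceD(1)[OF face] by blast
    with False sd_coneD(2)[OF assms(1)] show ?thesis
      by (auto simp: vertex_weights_def support_on_def)
  qed
qed

lemma vertex_weights_in_sd_cone:
  assumes "x \<in> realization_cone V K" "\<And>\<delta>. \<delta> \<in> S \<Longrightarrow> \<not> \<delta> \<subseteq> support_on V x"
  shows "vertex_weights x \<in> sd_cone"
proof -
  have supp: "support_on sd_vertices (vertex_weights x) = (\<lambda>v. {v}) ` support_on V x"
    by (auto simp: support_on_def sd_vertices_def vertex_weights_def)
  have "support_on V x \<in> K"
    using assms(1) unfolding realization_cone_def by blast
  then have "sd_face (support_on V x) {}"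
    unfolding sd_face_def subset_chain_def using assms(2) by (simp add: support_on_def)
  then have "support_on sd_vertices (vertex_weights x) \<in> sd_complex"
    unfolding supp sd_complex_def by blast
  moreover have "0 \<le> vertex_weights x \<gamma>" for \<gamma>
    using assms(1) by (simp add: vertex_weights_def realization_cone_def)
  moreover have "vertex_weights x \<gamma> = 0" if "\<gamma> \<notin> sd_vertices" for \<gamma>
    using that by (simp add: vertex_weights_def sd_vertices_def)
  ultimately show ?thesis
    unfolding realization_cone_def by blast
qed

lemma Union_in_sd_face:
  assumes "sd_face \<tau> C" "C \<noteq> {}"
  shows "\<Union>C \<in> C"
proof (rule Union_in_chain)
  show "finite C"
    using sd_faceD(2)[OF assms(1)] finite_S by (rule finite_subset)
  show "subset.chain S C"
    using assms(1) unfolding sd_face_def by blast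
qed fact

lemma sd_face_private_point:
  assumes face: "sd_face \<tau> C" and "C \<noteq> {}"
  obtains w where "w \<in> \<Union>C" "w \<notin> \<tau>" "w \<notin> \<Union>(C - {\<Union>C})"
proof -
  define m where "m = \<Union>C"
  have "m \<in> C" "m \<in> S"
    unfolding m_def using Union_in_sd_face[OF assms] sd_faceD(2)[OF face] by auto
  define m' where "m' = \<Union>(C - {m})"
  have "\<not> m \<subseteq> \<tau> \<union> m'"
  proof (cases "C - {m} = {}")
    case True
    then have "m' = {}"
      unfolding m'_def True by simp
    then show ?thesis
      using sd_faceD(5)[OF face \<open>m \<in> S\<close>] by simp
  next
    case False
    have "sd_face \<tau> (C - {m})"
      using face by (rule sd_face_subset) auto
    then have "m' \<in> C - {m}"
      unfolding m'_def using False by (rule Union_in_sd_face)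
    moreover have "m' \<subseteq> m"
      unfolding m'_def m_def by blast
    ultimately show ?thesis
      using sd_face_top_face[OF face _ \<open>m \<in> S\<close>, of m'] by blast
  qed
  then obtain w where "w \<in> m" "w \<notin> \<tau>" "w \<notin> m'" by blast
  then show ?thesis
    using that unfolding m_def m'_def by blast
qed

text \<open>The top face of the support of \<open>bary t\<close> is the largest member of the chain of \<open>t\<close>;
  at a point private to it, \<open>bary t\<close> sees only its weight, and this is the minimum over it.\<close>

lemma top_face_weight:
  assumes t: "t \<in> sd_cone" and "\<delta> \<in> S" "\<delta> \<subseteq> support_on V (bary t)"
  defines "\<gamma> \<equiv> top_face (support_on V (bary t))"
  shows "t \<gamma> \<noteq> 0" and "t \<gamma> = real (card \<gamma>) * Min (bary t ` \<gamma>)"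
proof -
  obtain \<tau> C where face: "sd_face \<tau> C" and supp: "support_on sd_vertices t = (\<lambda>v. {v}) ` \<tau> \<union> C"
    using t by (rule sd_coneE)
  have D: "support_on V (bary t) = \<tau> \<union> \<Union>C"
    using t supp by (rule support_bary_sd_face)
  have "C \<noteq> {}"
    using assms(2,3) D sd_faceD(5)[OF face] by auto
  then have m: "\<Union>C \<in> C"
    using face by (intro Union_in_sd_face)
  then have "\<Union>C \<in> S" "\<Union>C \<in> sd_vertices"
    using sd_faceD(2)[OF face] S_subset_sd_vertices by auto
  have \<gamma>: "\<gamma> = \<Union>C"
    unfolding \<gamma>_def D using sd_faceD(6)[OF face m] by simp
  show "t \<gamma> \<noteq> 0"
    using m supp \<open>\<Union>C \<in> sd_vertices\<close> unfolding \<gamma> by (auto simp: support_on_def)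
  obtain w where w: "w \<in> \<Union>C" "w \<notin> \<tau>" "w \<notin> \<Union>(C - {\<Union>C})"
    using face \<open>C \<noteq> {}\<close> by (rule sd_face_private_point)
  have at_w: "bary t w = t (\<Union>C) / real (card (\<Union>C))"
  proof (rule bary_at_private_point[OF \<open>\<Union>C \<in> sd_vertices\<close> w(1)])
    show "t \<gamma>' = 0 \<or> w \<notin> \<gamma>'" if "\<gamma>' \<in> sd_vertices" "\<gamma>' \<noteq> \<Union>C" for \<gamma>'
    proof (cases "t \<gamma>' = 0")
      case False
      with that(1) have "\<gamma>' \<in> (\<lambda>v. {v}) ` \<tau> \<union> C"
        unfolding supp[symmetric] by (simp add: support_on_def)
      with that(2) w(2,3) show ?thesis by blast
    qed simp
  qed
  have "Min (bary t ` \<Union>C) = t (\<Union>C) / real (card (\<Union>C))"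
  proof (rule Min_eqI)
    show "finite (bary t ` \<Union>C)"
      using finite_in_S[OF \<open>\<Union>C \<in> S\<close>] by simp
    show "t (\<Union>C) / real (card (\<Union>C)) \<in> bary t ` \<Union>C"
      using w(1) at_w by (metis image_eqI)
    fix y assume "y \<in> bary t ` \<Union>C"
    then show "t (\<Union>C) / real (card (\<Union>C)) \<le> y"
      using bary_lower_bound[of t, OF sd_coneD(1)[OF t] \<open>\<Union>C \<in> sd_vertices\<close>] by blast
  qed
  with card_sd_vertex_pos[OF \<open>\<Union>C \<in> sd_vertices\<close>] show "t \<gamma> = real (card \<gamma>) * Min (bary t ` \<gamma>)"
    unfolding \<gamma> by simp
qed

lemma sd_face_insert_top_face:
  assumes face: "sd_face \<tau> C" and "D \<in> K" "\<tau> \<union> \<Union>C \<subseteq> D" "top_face D \<in> S"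
  shows "sd_face \<tau> (insert (top_face D) C)"
  unfolding sd_face_def
proof (intro conjI ballI)
  have "\<gamma> \<subseteq> top_face D" if "\<gamma> \<in> C" for \<gamma>
    using sd_faceD(2)[OF face] that assms(3) by (intro subset_top_face) auto
  moreover have "subset.chain S C"
    using face unfolding sd_face_def by blast
  ultimately show "subset.chain S (insert (top_face D) C)"
    using assms(4) by (simp add: subset_chain_insert)
  have "\<tau> \<union> \<Union>(insert (top_face D) C) \<subseteq> D"
    using assms(3) top_face_subset by blast
  with \<open>D \<in> K\<close> show "\<tau> \<union> \<Union>(insert (top_face D) C) \<in> K"
    by (rule K_downward)
  fix \<gamma> assume "\<gamma> \<in> insert (top_face D) C"
  then show "top_face (\<tau> \<union> \<gamma>) = \<gamma>"
  proof
    assume \<gamma>: "\<gamma> = top_face D"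
    have "top_face (\<tau> \<union> \<gamma>) \<subseteq> top_face D"
      using assms(3) top_face_subset unfolding \<gamma> by (intro top_face_mono) blast
    with \<gamma> assms(4) show ?thesis
      using subset_top_face[of \<gamma> "\<tau> \<union> \<gamma>"] by blast
  qed (rule sd_faceD(6)[OF face])
qed (use sd_faceD(1,5)[OF face] in auto)

lemma top_face_support_in_S:
  assumes "x \<in> realization_cone V K" "\<delta> \<in> S" "\<delta> \<subseteq> support_on V x"
  shows "top_face (support_on V x) \<in> S"
  using assms by (intro top_face_in_S) (auto simp: realization_cone_def)

lemma support_bary_remove_top_face:
  assumes t: "t \<in> sd_cone" and "\<delta> \<in> S" "\<delta> \<subseteq> support_on V (bary t)"
  defines "\<gamma> \<equiv> top_face (support_on V (bary t))"
  shows "support_on V (bary (t(\<gamma> := 0))) \<subset> support_on V (bary t)"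
proof -
  have "\<gamma> \<in> S"
    unfolding \<gamma>_def using bary_in_cone[OF t] assms(2,3) by (rule top_face_support_in_S)
  then have "\<gamma> \<in> sd_vertices" "finite \<gamma>" "\<gamma> \<subseteq> V"
    using S_subset_sd_vertices finite_in_S S_subset_V by auto
  have "\<gamma> \<noteq> {}"
    using S_not_subset_singleton[OF \<open>\<gamma> \<in> S\<close>] by blast
  have upd: "bary (t(\<gamma> := 0)) w = bary t w - (if w \<in> \<gamma> then t \<gamma> / real (card \<gamma>) else 0)" for w
    using bary_fun_upd[OF \<open>\<gamma> \<in> sd_vertices\<close>, of t 0 w] by simp
  have subset: "support_on V (bary (t(\<gamma> := 0))) \<subseteq> support_on V (bary t)"
  proof
    fix w assume "w \<in> support_on V (bary (t(\<gamma> := 0)))"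
    then have "w \<in> V" "bary (t(\<gamma> := 0)) w \<noteq> 0"
      by (simp_all add: support_on_def)
    moreover have "0 \<le> t \<gamma> / real (card \<gamma>)" "0 \<le> bary (t(\<gamma> := 0)) w"
      using sd_coneD(1)[OF t] sd_coneD(1)[OF fun_upd_zero_in_sd_cone[OF t]]
      by (simp_all add: bary_nonneg)
    ultimately show "w \<in> support_on V (bary t)"
      using upd[of w] by (auto simp: support_on_def split: if_splits)
  qed
  have "Min (bary t ` \<gamma>) \<in> bary t ` \<gamma>"
    using \<open>finite \<gamma>\<close> \<open>\<gamma> \<noteq> {}\<close> by (intro Min_in) auto
  then obtain w where w: "w \<in> \<gamma>" "bary t w = Min (bary t ` \<gamma>)"
    by (metis imageE)
  have "t \<gamma> \<noteq> 0" "bary t w = t \<gamma> / real (card \<gamma>)"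
    using top_face_weight[OF assms(1-3)] card_sd_vertex_pos[OF \<open>\<gamma> \<in> sd_vertices\<close>] w(2)
    unfolding \<gamma>_def by auto
  with w(1) \<open>\<gamma> \<subseteq> V\<close> card_sd_vertex_pos[OF \<open>\<gamma> \<in> sd_vertices\<close>]
  have "w \<in> support_on V (bary t)" "w \<notin> support_on V (bary (t(\<gamma> := 0)))"
    using upd[of w] by (auto simp: support_on_def)
  with subset show ?thesis by blast
qed

lemma inj_on_bary: "inj_on bary sd_cone"
proof -
  have "t1 = t2" if "t1 \<in> sd_cone" "t2 \<in> sd_cone" "bary t1 = bary t2" for t1 t2
    using that
  proof (induction "card (support_on V (bary t1))" arbitrary: t1 t2 rule: less_induct)
    case less
    define D where "D = support_on V (bary t1)"
    show ?case
    proof (cases "\<exists>\<delta>\<in>S. \<delta> \<subseteq> D")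
      case False
      then show ?thesis
        using sd_cone_eq_vertex_weights less.prems unfolding D_def by metis
    next
      case True
      then obtain \<delta> where \<delta>: "\<delta> \<in> S" "\<delta> \<subseteq> D" by blast
      define \<gamma> where "\<gamma> = top_face D"
      have "\<gamma> \<in> sd_vertices"
        using top_face_support_in_S[OF bary_in_cone[OF less.prems(1)] \<delta>[unfolded D_def]]
          S_subset_sd_vertices
        unfolding \<gamma>_def D_def by blast
      have "t1 \<gamma> = t2 \<gamma>"
        using top_face_weight(2)[OF less.prems(1) \<delta>[unfolded D_def]]
          top_face_weight(2)[OF less.prems(2) \<delta>[unfolded D_def less.prems(3)]] less.prems(3)
        unfolding \<gamma>_def D_def by simp
      have "t1(\<gamma> := 0) = t2(\<gamma> := 0)"
      proof (rule less.hyps)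
        have "finite D"
          unfolding D_def support_on_def using finite_V by simp
        then show "card (support_on V (bary (t1(\<gamma> := 0)))) < card (support_on V (bary t1))"
          using support_bary_remove_top_face[OF less.prems(1) \<delta>[unfolded D_def]]
          unfolding \<gamma>_def D_def by (intro psubset_card_mono)
        show "t1(\<gamma> := 0) \<in> sd_cone" "t2(\<gamma> := 0) \<in> sd_cone"
          using less.prems(1,2) by (simp_all add: fun_upd_zero_in_sd_cone)
        show "bary (t1(\<gamma> := 0)) = bary (t2(\<gamma> := 0))"
          using less.prems(3) \<open>t1 \<gamma> = t2 \<gamma>\<close> by (intro ext) (simp add: bary_fun_upd[OF \<open>\<gamma> \<in> sd_vertices\<close>])
      qed
      with \<open>t1 \<gamma> = t2 \<gamma>\<close> show "t1 = t2"
        by (metis fun_upd_triv fun_upd_upd)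
    qed
  qed
  then show ?thesis
    unfolding inj_on_def by blast
qed

lemma lower_on_top_face:
  assumes x: "x \<in> realization_cone V K" and "\<delta> \<in> S" "\<delta> \<subseteq> support_on V x"
  defines "\<gamma> \<equiv> top_face (support_on V x)"
  defines "x' \<equiv> \<lambda>w. if w \<in> \<gamma> then x w - Min (x ` \<gamma>) else x w"
  shows "0 < Min (x ` \<gamma>)" and "x' \<in> realization_cone V K"
    and "support_on V x' \<subset> support_on V x" and "\<not> \<gamma> \<subseteq> support_on V x'"
proof -
  have x0: "\<And>w. 0 \<le> x w" "\<And>w. w \<notin> V \<Longrightarrow> x w = 0" "support_on V x \<in> K"
    using x unfolding realization_cone_def by auto
  have "\<gamma> \<in> S"
    unfolding \<gamma>_def using assms(1-3) by (rule top_face_support_in_S)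
  then have "finite \<gamma>" "\<gamma> \<noteq> {}" "\<gamma> \<subseteq> support_on V x"
    using finite_in_S S_not_subset_singleton[OF \<open>\<gamma> \<in> S\<close>] top_face_subset unfolding \<gamma>_def by blast+
  have "Min (x ` \<gamma>) \<in> x ` \<gamma>"
    using \<open>finite \<gamma>\<close> \<open>\<gamma> \<noteq> {}\<close> by (intro Min_in) auto
  then obtain w0 where w0: "w0 \<in> \<gamma>" "x w0 = Min (x ` \<gamma>)"
    by (metis imageE)
  have Min_le: "Min (x ` \<gamma>) \<le> x w" if "w \<in> \<gamma>" for w
    using \<open>finite \<gamma>\<close> that by simp
  show "0 < Min (x ` \<gamma>)"
    using w0 \<open>\<gamma> \<subseteq> support_on V x\<close> x0(1)[of w0] by (force simp: support_on_def)
  have subset: "support_on V x' \<subseteq> support_on V x"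
    using \<open>\<gamma> \<subseteq> support_on V x\<close> by (auto simp: x'_def support_on_def)
  have "w0 \<in> support_on V x" "w0 \<notin> support_on V x'"
    using w0 \<open>\<gamma> \<subseteq> support_on V x\<close> by (auto simp: x'_def support_on_def)
  with subset show "support_on V x' \<subset> support_on V x" "\<not> \<gamma> \<subseteq> support_on V x'"
    using w0(1) by blast+
  have "support_on V x' \<in> K"
    using x0(3) subset by (rule K_downward)
  moreover have "0 \<le> x' w" for w
    using x0(1) Min_le by (simp add: x'_def)
  moreover have "x' w = 0" if "w \<notin> V" for w
    using that x0(2) \<open>\<gamma> \<subseteq> support_on V x\<close> by (auto simp: x'_def support_on_def)
  ultimately show "x' \<in> realization_cone V K"
    unfolding realization_cone_def by blast
qed

lemma raise_top_face:
  assumes t: "t \<in> sd_cone" and "D \<in> K" "support_on V (bary t) \<subseteq> D"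
    and \<gamma>: "\<gamma> = top_face D" "\<gamma> \<in> S"
    and not_subset: "\<not> \<gamma> \<subseteq> support_on V (bary t)" and "0 < c"
  shows "t(\<gamma> := c) \<in> sd_cone"
    and "bary (t(\<gamma> := c)) w = bary t w + (if w \<in> \<gamma> then c / real (card \<gamma>) else 0)"
proof -
  obtain \<tau> C where face: "sd_face \<tau> C" and supp: "support_on sd_vertices t = (\<lambda>v. {v}) ` \<tau> \<union> C"
    using t by (rule sd_coneE)
  have "\<gamma> \<in> sd_vertices"
    using \<gamma>(2) S_subset_sd_vertices by blast
  have "\<gamma> \<notin> support_on sd_vertices t"
    using not_subset support_bary[of t, OF sd_coneD(1)[OF t]] by blast
  then have "t \<gamma> = 0"
    using \<open>\<gamma> \<in> sd_vertices\<close> by (simp add: support_on_def)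
  with \<open>\<gamma> \<in> sd_vertices\<close> show "bary (t(\<gamma> := c)) w = bary t w + (if w \<in> \<gamma> then c / real (card \<gamma>) else 0)"
    by (simp add: bary_fun_upd)
  have "support_on sd_vertices (t(\<gamma> := c)) = (\<lambda>v. {v}) ` \<tau> \<union> insert \<gamma> C"
    using supp \<open>\<gamma> \<in> sd_vertices\<close> \<open>0 < c\<close> \<open>t \<gamma> = 0\<close> by (auto simp: support_on_def)
  moreover have "sd_face \<tau> (insert \<gamma> C)"
    using face assms(2) assms(3)[unfolded support_bary_sd_face[OF t supp]] \<gamma>(2)
    unfolding \<gamma>(1) by (rule sd_face_insert_top_face)
  ultimately have "support_on sd_vertices (t(\<gamma> := c)) \<in> sd_complex"
    unfolding sd_complex_def by blast
  with sd_coneD(1,2)[OF t] \<open>\<gamma> \<in> sd_vertices\<close> \<open>0 < c\<close> show "t(\<gamma> := c) \<in> sd_cone"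
    unfolding realization_cone_def by auto
qed

lemma bary_onto_cone:
  assumes "x \<in> realization_cone V K"
  shows "\<exists>t \<in> sd_cone. bary t = x"
  using assms
proof (induction "card (support_on V x)" arbitrary: x rule: less_induct)
  case less
  define D where "D = support_on V x"
  show ?case
  proof (cases "\<exists>\<delta>\<in>S. \<delta> \<subseteq> D")
    case False
    then have "vertex_weights x \<in> sd_cone"
      using less.prems unfolding D_def by (intro vertex_weights_in_sd_cone) auto
    moreover have "bary (vertex_weights x) = x"
      using less.prems by (auto simp: bary_vertex_weights realization_cone_def)
    ultimately show ?thesis by blast
  next
    case True
    then obtain \<delta> where \<delta>: "\<delta> \<in> S" "\<delta> \<subseteq> D" by blast
    define \<gamma> where "\<gamma> = top_face D"
    define \<mu> where "\<mu> = Min (x ` \<gamma>)"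
    define x' where "x' = (\<lambda>w. if w \<in> \<gamma> then x w - \<mu> else x w)"
    have lower: "0 < \<mu>" "x' \<in> realization_cone V K" "support_on V x' \<subset> D"
      "\<not> \<gamma> \<subseteq> support_on V x'"
      using lower_on_top_face[OF less.prems \<delta>[unfolded D_def]]
      unfolding x'_def \<mu>_def \<gamma>_def D_def by blast+
    have "finite D"
      unfolding D_def support_on_def using finite_V by simp
    then have "card (support_on V x') < card (support_on V x)"
      using lower(3) unfolding D_def by (intro psubset_card_mono)
    then obtain t' where t': "t' \<in> sd_cone" "bary t' = x'"
      using less.hyps lower(2) by blast
    have "D \<in> K" "\<gamma> \<in> S"
      using less.prems top_face_support_in_S[OF less.prems \<delta>[unfolded D_def]]
      unfolding D_def \<gamma>_def realization_cone_def by blast+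
    have supp': "support_on V (bary t') \<subseteq> D" "\<not> \<gamma> \<subseteq> support_on V (bary t')"
      using lower(3,4) t'(2) by auto
    have "0 < real (card \<gamma>) * \<mu>"
      using lower(1) card_sd_vertex_pos[of \<gamma>] \<open>\<gamma> \<in> S\<close> S_subset_sd_vertices by auto
    note raise = raise_top_face[OF t'(1) \<open>D \<in> K\<close> supp'(1) \<gamma>_def \<open>\<gamma> \<in> S\<close> supp'(2) this]
    have "bary (t'(\<gamma> := real (card \<gamma>) * \<mu>)) = x"
      using raise(2) t'(2) card_sd_vertex_pos[of \<gamma>] \<open>\<gamma> \<in> S\<close> S_subset_sd_vertices
      by (intro ext) (auto simp: x'_def)
    with raise(1) show ?thesis
      by blast
  qed
qed

lemma bij_betw_bary: "bij_betw bary sd_cone (realization_cone V K)"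
  unfolding bij_betw_def using inj_on_bary bary_in_cone bary_onto_cone by blast

theorem homeomorphism_bary: "\<exists>g. homeomorphism (georeal sd_vertices sd_complex) (georeal V K) bary g"
  using fin_simplicial_complex_sd finite_V bij_betw_bary sum_bary_V continuous_on_lin_ext
  by (rule homeomorphism_georeal_if_bij_betw_cones)

lemma bary_eq_if_vanishes_on_S:
  assumes "\<And>\<gamma>. \<gamma> \<in> S \<Longrightarrow> t \<gamma> = 0" "v \<in> V"
  shows "bary t v = t {v}"
proof -
  have "bary t v = t {v} / real (card {v})"
    using assms by (intro bary_at_private_point) (auto simp: sd_vertices_def)
  then show ?thesis by simp
qed

lemma sum_bary_saturated:
  assumes "A \<subseteq> V" "\<And>\<gamma>. \<gamma> \<in> sd_vertices \<Longrightarrow> \<gamma> \<subseteq> A \<or> \<gamma> \<inter> A = {}"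
  shows "sum (bary t) A = sum t {\<gamma> \<in> sd_vertices. \<gamma> \<subseteq> A}"
proof -
  have "sum (bary t) A = (\<Sum>\<gamma>\<in>sd_vertices. t \<gamma> * real (card (A \<inter> \<gamma>)) / real (card \<gamma>))"
    using assms(1) finite_V by (intro sum_bary) (rule finite_subset)
  also have "\<dots> = (\<Sum>\<gamma>\<in>sd_vertices. if \<gamma> \<subseteq> A then t \<gamma> else 0)"
  proof (intro sum.cong refl)
    fix \<gamma> assume "\<gamma> \<in> sd_vertices"
    then have "A \<inter> \<gamma> = (if \<gamma> \<subseteq> A then \<gamma> else {})" "0 < card \<gamma>"
      using assms(2) card_sd_vertex_pos by auto
    then show "t \<gamma> * real (card (A \<inter> \<gamma>)) / real (card \<gamma>) = (if \<gamma> \<subseteq> A then t \<gamma> else 0)"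
      by simp
  qed
  also have "\<dots> = sum t {\<gamma> \<in> sd_vertices. \<gamma> \<subseteq> A}"
    using finite_sd_vertices by (simp add: sum.inter_filter)
  finally show ?thesis .
qed

lemma sd_complex_restrict:
  assumes "A \<subseteq> V" "\<And>\<delta>. \<delta> \<in> S \<Longrightarrow> \<not> \<delta> \<subseteq> A"
  shows "{F \<in> sd_complex. F \<subseteq> (\<lambda>v. {v}) ` A} = (\<lambda>G. (\<lambda>v. {v}) ` G) ` {G \<in> K. G \<subseteq> A}"
proof (intro subset_antisym subsetI)
  fix F assume "F \<in> {F \<in> sd_complex. F \<subseteq> (\<lambda>v. {v}) ` A}"
  then obtain \<tau> C where face: "sd_face \<tau> C" and F: "F = (\<lambda>v. {v}) ` \<tau> \<union> C" "F \<subseteq> (\<lambda>v. {v}) ` A"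
    by (auto elim: sd_complexE)
  have "C = {}"
    using F sd_faceD(2)[OF face] singleton_notin_S by blast
  with sd_faceD(4)[OF face] have "\<tau> \<in> K"
    by simp
  moreover have "\<tau> \<subseteq> A"
    using F by blast
  ultimately show "F \<in> (\<lambda>G. (\<lambda>v. {v}) ` G) ` {G \<in> K. G \<subseteq> A}"
    using F(1) \<open>C = {}\<close> by blast
next
  fix F assume "F \<in> (\<lambda>G. (\<lambda>v. {v}) ` G) ` {G \<in> K. G \<subseteq> A}"
  then obtain G where G: "G \<in> K" "G \<subseteq> A" "F = (\<lambda>v. {v}) ` G" by blast
  then have "sd_face G {}"
    using assms unfolding sd_face_def subset_chain_def by (auto dest: subset_trans)
  with G show "F \<in> {F \<in> sd_complex. F \<subseteq> (\<lambda>v. {v}) ` A}"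
    unfolding sd_complex_def by blast
qed

end

locale coloured_complex =
  fixes \<Sigma>1 \<Sigma>2 :: "'a set" and star :: 'a and n :: nat and K :: "'a set set" and c :: "'a \<Rightarrow> nat"
  assumes complex: "fin_simplicial_complex (insert star (\<Sigma>1 \<union> \<Sigma>2)) K"
    and disjoint: "\<Sigma>1 \<inter> \<Sigma>2 = {}" and star_notin: "star \<notin> \<Sigma>1 \<union> \<Sigma>2"
    and card_le: "F \<in> K \<Longrightarrow> F \<subseteq> \<Sigma>1 \<union> \<Sigma>2 \<Longrightarrow> card F \<le> Suc n"
    and colour_le: "v \<in> \<Sigma>1 \<Longrightarrow> c v \<le> n"
    and colour_inj: "F \<in> K \<Longrightarrow> inj_on c (F \<inter> \<Sigma>1)"
begin

text \<open>The new vertex \<open>\<gamma>\<close> will have colour \<open>card \<gamma> - 1\<close>; the last condition keeps that colour above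
  the colours of the \<open>\<Sigma>1\<close>-vertices of \<open>\<gamma>\<close>.\<close>

definition split_faces :: "'a set set" where
  "split_faces = {\<gamma> \<in> K. \<gamma> \<subseteq> \<Sigma>1 \<union> \<Sigma>2 \<and> \<gamma> \<inter> \<Sigma>2 \<noteq> {} \<and> 2 \<le> card \<gamma>
     \<and> (\<forall>a \<in> \<gamma> \<inter> \<Sigma>1. c a + 2 \<le> card \<gamma>)}"

lemma split_facesI:
  assumes "\<gamma> \<in> K" "\<gamma> \<subseteq> \<Sigma>1 \<union> \<Sigma>2" "\<gamma> \<inter> \<Sigma>2 \<noteq> {}" "2 \<le> card \<gamma>"
    "\<And>a. a \<in> \<gamma> \<Longrightarrow> a \<in> \<Sigma>1 \<Longrightarrow> c a + 2 \<le> card \<gamma>"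
  shows "\<gamma> \<in> split_faces"
  using assms unfolding split_faces_def by blast

lemma split_facesD:
  assumes "\<gamma> \<in> split_faces"
  shows "\<gamma> \<in> K" "\<gamma> \<subseteq> \<Sigma>1 \<union> \<Sigma>2" "\<gamma> \<inter> \<Sigma>2 \<noteq> {}" "2 \<le> card \<gamma>"
    "a \<in> \<gamma> \<Longrightarrow> a \<in> \<Sigma>1 \<Longrightarrow> c a + 2 \<le> card \<gamma>"
  using assms unfolding split_faces_def by blast+

sublocale partial_subdivision "insert star (\<Sigma>1 \<union> \<Sigma>2)" K split_faces
proof
  show "split_faces \<subseteq> K"
    unfolding split_faces_def by blast
  show "2 \<le> card \<delta>" if "\<delta> \<in> split_faces" for \<delta>
    using that by (rule split_facesD)
  fix \<delta> \<delta>' assume \<delta>: "\<delta> \<in> split_faces" and \<delta>': "\<delta>' \<in> split_faces" and "\<delta> \<union> \<delta>' \<in> K"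
  have "finite (\<delta> \<union> \<delta>')"
    using \<open>\<delta> \<union> \<delta>' \<in> K\<close> complex fin_simplicial_complexD(1,2) finite_subset by metis
  then have "card \<delta> \<le> card (\<delta> \<union> \<delta>')" "card \<delta>' \<le> card (\<delta> \<union> \<delta>')"
    by (simp_all add: card_mono)
  then show "\<delta> \<union> \<delta>' \<in> split_faces"
    using split_facesD[OF \<delta>] split_facesD[OF \<delta>'] \<open>\<delta> \<union> \<delta>' \<in> K\<close>
    by (intro split_facesI) fastforce+
qed (rule complex)

definition colour :: "'a set \<Rightarrow> nat" where
  "colour \<gamma> = (if \<gamma> \<in> split_faces then card \<gamma> - 1 else if the_elem \<gamma> \<in> \<Sigma>1 then c (the_elem \<gamma>) else 0)"

lemma colour_singleton: "colour {v} = (if v \<in> \<Sigma>1 then c v else 0)"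
  by (simp add: colour_def singleton_notin_S)

lemma colour_split_face: "\<gamma> \<in> split_faces \<Longrightarrow> colour \<gamma> = card \<gamma> - 1"
  by (simp add: colour_def)

lemma colour_le_n:
  assumes "\<gamma> \<in> sd_vertices" "\<gamma> \<noteq> {star}"
  shows "colour \<gamma> \<le> n"
proof (cases "\<gamma> \<in> split_faces")
  case True
  then show ?thesis
    using card_le[OF split_facesD(1,2)[OF True]] by (simp add: colour_split_face)
next
  case False
  with assms obtain v where "\<gamma> = {v}"
    unfolding sd_vertices_def by blast
  then show ?thesis
    using colour_le by (simp add: colour_singleton)
qed

lemma pair_in_split_faces:
  assumes "{v, w} \<in> K" "v \<noteq> w" "v \<in> \<Sigma>2" "w \<in> \<Sigma>1 \<union> \<Sigma>2" "w \<in> \<Sigma>1 \<Longrightarrow> c w = 0"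
  shows "{v, w} \<in> split_faces"
  using assms disjoint by (intro split_facesI) auto

lemma insert_in_split_faces:
  assumes "\<gamma> \<in> split_faces" "insert v \<gamma> \<in> K" "v \<in> \<Sigma>1" "c v + 1 \<le> card \<gamma>"
  shows "insert v \<gamma> \<in> split_faces"
proof (rule split_facesI)
  have "finite \<gamma>"
    using assms(1) by (rule finite_in_S)
  have card_insert: "card \<gamma> \<le> card (insert v \<gamma>)"
    by (rule card_insert_le)
  then show "2 \<le> card (insert v \<gamma>)"
    using split_facesD(4)[OF assms(1)] by simp
  show "c a + 2 \<le> card (insert v \<gamma>)" if "a \<in> insert v \<gamma>" "a \<in> \<Sigma>1" for a
  proof (cases "a \<in> \<gamma>")
    case True
    then show ?thesis
      using split_facesD(5)[OF assms(1) _ that(2)] card_insert by fastforce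
  next
    case False
    with that(1) \<open>finite \<gamma>\<close> assms(4) show ?thesis by simp
  qed
qed (use assms split_facesD(2,3)[OF assms(1)] in auto)

lemma colour_singletons_distinct:
  assumes face: "sd_face \<tau> C" and "v \<in> \<tau>" "w \<in> \<tau>" "v \<noteq> w" "v \<noteq> star" "w \<noteq> star"
  shows "colour {v} \<noteq> colour {w}"
proof -
  have "\<tau> \<in> K"
    by (rule K_downward[OF sd_faceD(4)[OF face]]) blast
  have \<tau>: "\<tau> \<subseteq> insert star (\<Sigma>1 \<union> \<Sigma>2)"
    using face by (rule sd_faceD(1))
  have Sigma2_case: "colour {v'} \<noteq> colour {w'}"
    if "v' \<in> \<tau>" "w' \<in> \<tau>" "v' \<noteq> w'" "w' \<noteq> star" "v' \<in> \<Sigma>2" for v' w'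
  proof
    assume same: "colour {v'} = colour {w'}"
    have "{v', w'} \<in> K"
      by (rule K_downward[OF \<open>\<tau> \<in> K\<close>]) (use that in blast)
    moreover have "colour {v'} = 0"
      using that(5) disjoint by (auto simp: colour_singleton)
    ultimately have "{v', w'} \<in> split_faces"
      using that \<tau> same by (intro pair_in_split_faces) (auto simp: colour_singleton split: if_splits)
    with sd_faceD(5)[OF face] that(1,2) show False by blast
  qed
  show ?thesis
  proof (cases "v \<in> \<Sigma>1 \<and> w \<in> \<Sigma>1")
    case True
    then show ?thesis
      using colour_inj[OF \<open>\<tau> \<in> K\<close>] assms(2-4) by (auto simp: colour_singleton inj_on_def)
  next
    case False
    then have "v \<in> \<Sigma>2 \<or> w \<in> \<Sigma>2"
      using \<tau> assms(2,3,5,6) by blast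
    then show ?thesis
      using Sigma2_case[of v w] Sigma2_case[of w v] assms(2-6) by metis
  qed
qed

lemma colour_singleton_ne_split_face:
  assumes face: "sd_face \<tau> C" and "v \<in> \<tau>" "\<gamma> \<in> C"
  shows "colour {v} \<noteq> colour \<gamma>"
proof
  assume same: "colour {v} = colour \<gamma>"
  have \<gamma>: "\<gamma> \<in> split_faces"
    using sd_faceD(2)[OF face] assms(3) by blast
  then have "2 \<le> card \<gamma>" "colour \<gamma> = card \<gamma> - 1"
    by (simp_all add: split_facesD(4) colour_split_face)
  with same have "v \<in> \<Sigma>1" and cv: "c v = card \<gamma> - 1"
    by (auto simp: colour_singleton split: if_splits)
  then have "v \<notin> \<gamma>"
    using split_facesD(5)[OF \<gamma>] \<open>2 \<le> card \<gamma>\<close> by fastforce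
  have "insert v \<gamma> \<in> K"
    by (rule K_downward[OF sd_faceD(4)[OF face]]) (use assms(2,3) in blast)
  then have "insert v \<gamma> \<in> split_faces"
    using \<gamma> \<open>v \<in> \<Sigma>1\<close> cv \<open>2 \<le> card \<gamma>\<close> by (intro insert_in_split_faces) auto
  then have "insert v \<gamma> \<subseteq> \<gamma>"
    using sd_face_top_face[OF face assms(3)] assms(2) by blast
  with \<open>v \<notin> \<gamma>\<close> show False by blast
qed

lemma colour_inj_on_chain:
  assumes face: "sd_face \<tau> C"
  shows "inj_on colour C"
proof
  fix \<gamma> \<gamma>' assume "\<gamma> \<in> C" "\<gamma>' \<in> C" "colour \<gamma> = colour \<gamma>'"
  moreover from this have "\<gamma> \<in> split_faces" "\<gamma>' \<in> split_faces"
    using sd_faceD(2)[OF face] by blast+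
  ultimately have "card \<gamma> = card \<gamma>'"
    using split_facesD(4) by (fastforce simp: colour_split_face)
  moreover have "\<gamma> \<subseteq> \<gamma>' \<or> \<gamma>' \<subseteq> \<gamma>"
    using sd_faceD(3)[OF face \<open>\<gamma> \<in> C\<close> \<open>\<gamma>' \<in> C\<close>] .
  ultimately show "\<gamma> = \<gamma>'"
    using finite_in_S[OF \<open>\<gamma> \<in> split_faces\<close>] finite_in_S[OF \<open>\<gamma>' \<in> split_faces\<close>]
    by (metis card_subset_eq)
qed

lemma colour_inj_on_sd_complex:
  assumes "F \<in> sd_complex"
  shows "inj_on colour (F - {{star}})"
proof -
  obtain \<tau> C where face: "sd_face \<tau> C" and F: "F = (\<lambda>v. {v}) ` \<tau> \<union> C"
    using assms by (rule sd_complexE)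
  have "F - {{star}} = (\<lambda>v. {v}) ` (\<tau> - {star}) \<union> C"
    using F sd_faceD(2)[OF face] singleton_notin_S by auto
  moreover have "inj_on colour ((\<lambda>v. {v}) ` (\<tau> - {star}))"
    using colour_singletons_distinct[OF face] by (auto simp: inj_on_def)
  ultimately show ?thesis
    using colour_inj_on_chain[OF face] colour_singleton_ne_split_face[OF face]
    by (auto simp: inj_on_Un)
qed

lemma n_decomposable_sd:
  "n_decomposable n (sd_vertices - {{star}}) (\<lambda>\<gamma> t. t \<gamma>) (georeal sd_vertices sd_complex)"
  unfolding n_decomposable_def
proof (intro exI[of _ colour] conjI ballI impI)
  show "colour \<gamma> \<le> n" if "\<gamma> \<in> sd_vertices - {{star}}" for \<gamma>
    using that colour_le_n by blast
  fix \<gamma> \<gamma>' t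
  assume \<gamma>: "\<gamma> \<in> sd_vertices - {{star}}" "\<gamma>' \<in> sd_vertices - {{star}}" "\<gamma> \<noteq> \<gamma>' \<and> colour \<gamma> = colour \<gamma>'"
    and t: "t \<in> georeal sd_vertices sd_complex"
  show "t \<gamma> * t \<gamma>' = 0"
  proof (rule ccontr)
    assume "t \<gamma> * t \<gamma>' \<noteq> 0"
    with \<gamma> have "{\<gamma>, \<gamma>'} \<subseteq> {g \<in> sd_vertices. t g \<noteq> 0} - {{star}}"
      by auto
    moreover have "inj_on colour ({g \<in> sd_vertices. t g \<noteq> 0} - {{star}})"
      using t unfolding georeal_def by (intro colour_inj_on_sd_complex) blast
    ultimately show False
      using \<gamma>(3) by (auto dest: inj_onD)
  qed
qed

lemma singletons_subset_sd_vertices: "(\<lambda>\<sigma>. {\<sigma>}) ` insert star (\<Sigma>1 \<union> \<Sigma>2) \<subseteq> sd_vertices"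
  unfolding sd_vertices_def by blast

lemma sd_vertices_subset_K: "sd_vertices \<subseteq> K"
  unfolding sd_vertices_def using singleton_K S_in_K by blast

lemma new_vertex_meets_Sigma2:
  "\<forall>\<gamma> \<in> sd_vertices - (\<lambda>\<sigma>. {\<sigma>}) ` insert star (\<Sigma>1 \<union> \<Sigma>2). \<gamma> \<inter> \<Sigma>2 \<noteq> {}"
  unfolding sd_vertices_def using split_facesD(3) by blast

lemma sd_complex_restrict_Sigma1:
  "{F \<in> sd_complex. F \<subseteq> (\<lambda>\<sigma>. {\<sigma>}) ` \<Sigma>1} = (\<lambda>G. (\<lambda>\<sigma>. {\<sigma>}) ` G) ` {G \<in> K. G \<subseteq> \<Sigma>1}"
  using split_facesD(3) disjoint by (intro sd_complex_restrict) auto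

lemma bary_eq_on_Sigma1:
  assumes "\<forall>\<gamma>. t \<gamma> \<noteq> 0 \<longrightarrow> \<gamma> \<in> (\<lambda>\<sigma>. {\<sigma>}) ` \<Sigma>1" "\<sigma> \<in> \<Sigma>1"
  shows "t {\<sigma>} = bary t \<sigma>"
  using assms singleton_notin_S by (subst bary_eq_if_vanishes_on_S) auto

lemma sum_bary_Sigma: "sum (bary t) (\<Sigma>1 \<union> \<Sigma>2) = sum t (sd_vertices - {{star}})"
proof -
  have "{\<gamma> \<in> sd_vertices. \<gamma> \<subseteq> \<Sigma>1 \<union> \<Sigma>2} = sd_vertices - {{star}}"
    using star_notin split_facesD(2) unfolding sd_vertices_def by auto
  moreover have "\<gamma> \<subseteq> \<Sigma>1 \<union> \<Sigma>2 \<or> \<gamma> \<inter> (\<Sigma>1 \<union> \<Sigma>2) = {}" if "\<gamma> \<in> sd_vertices" for \<gamma>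
    using that star_notin split_facesD(2) unfolding sd_vertices_def by auto
  ultimately show ?thesis
    using sum_bary_saturated[of "\<Sigma>1 \<union> \<Sigma>2" t] by auto
qed

end

lemma nerve_cx_witness:
  assumes "F \<in> nerve_cx S h X" "2 \<le> card F"
  obtains x where "x \<in> X" "\<forall>\<sigma>\<in>F. h \<sigma> x \<noteq> 0"
proof -
  have "F \<noteq> {}" "card F \<noteq> 1"
    using assms(2) by auto
  then obtain x where "x \<in> X" "finite F" "(\<Prod>\<sigma>\<in>F. h \<sigma> x) \<noteq> 0"
    using assms(1) unfolding nerve_cx_def by blast
  then show ?thesis
    by (intro that[of x]) auto
qed

lemma fin_simplicial_complex_nerve_cx:
  assumes "finite S"
  shows "fin_simplicial_complex S (nerve_cx S h X)"
  unfolding fin_simplicial_complex_def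
proof (intro conjI ballI allI impI)
  fix F G assume F: "F \<in> nerve_cx S h X" and "G \<subseteq> F"
  have "F \<subseteq> S"
    using F unfolding nerve_cx_def by blast
  with \<open>G \<subseteq> F\<close> assms have "finite F" "finite G" "G \<subseteq> S"
    by (auto intro: finite_subset)
  show "G \<in> nerve_cx S h X"
  proof (cases "card G \<le> 1")
    case True
    with \<open>finite G\<close> have "G = {} \<or> card G = 1"
      by (cases "card G") auto
    with \<open>G \<subseteq> S\<close> show ?thesis
      unfolding nerve_cx_def by blast
  next
    case False
    with card_mono[OF \<open>finite F\<close> \<open>G \<subseteq> F\<close>] have "2 \<le> card F"
      by linarith
    with F obtain x where "x \<in> X" "\<forall>\<sigma>\<in>F. h \<sigma> x \<noteq> 0"
      by (rule nerve_cx_witness)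
    with \<open>G \<subseteq> F\<close> \<open>finite G\<close> have "(\<Prod>\<sigma>\<in>G. h \<sigma> x) \<noteq> 0"
      by auto
    with False \<open>G \<subseteq> S\<close> \<open>finite G\<close> \<open>x \<in> X\<close> show ?thesis
      unfolding nerve_cx_def by force
  qed
qed (use assms in \<open>auto simp: nerve_cx_def\<close>)

lemma card_nerve_cx_le:
  assumes vanish: "\<And>F x. F \<subseteq> T \<Longrightarrow> card F = n + 2 \<Longrightarrow> x \<in> X \<Longrightarrow> (\<Prod>\<sigma>\<in>F. h \<sigma> x) = 0"
    and F: "F \<in> nerve_cx S h X" "F \<subseteq> T"
  shows "card F \<le> Suc n"
proof (rule ccontr)
  assume "\<not> card F \<le> Suc n"
  then have "n + 2 \<le> card F" "2 \<le> card F"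
    by simp_all
  obtain x where x: "x \<in> X" "\<forall>\<sigma>\<in>F. h \<sigma> x \<noteq> 0"
    using F(1) \<open>2 \<le> card F\<close> by (rule nerve_cx_witness)
  obtain G where G: "G \<subseteq> F" "card G = n + 2" "finite G"
    using \<open>n + 2 \<le> card F\<close> by (rule obtain_subset_with_card_n)
  with x(2) have "(\<Prod>\<sigma>\<in>G. h \<sigma> x) \<noteq> 0"
    by auto
  moreover have "G \<subseteq> T"
    using G(1) F(2) by (rule subset_trans)
  then have "(\<Prod>\<sigma>\<in>G. h \<sigma> x) = 0"
    using G(2) x(1) by (rule vanish)
  ultimately show False
    by contradiction
qed

lemma n_decomposable_colouring_nerve_cx:
  assumes "n_decomposable n M h X"
  obtains c where "\<forall>m\<in>M. c m \<le> n" "\<forall>F\<in>nerve_cx S h X. inj_on c (F \<inter> M)"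
proof -
  obtain c where c: "(\<forall>m\<in>M. c m \<le> n)
      \<and> (\<forall>m\<in>M. \<forall>m'\<in>M. m \<noteq> m' \<and> c m = c m' \<longrightarrow> (\<forall>x\<in>X. h m x * h m' x = 0))"
    using assms unfolding n_decomposable_def by (rule exE)
  then have c_le: "\<forall>m\<in>M. c m \<le> n"
    and orth: "\<forall>m\<in>M. \<forall>m'\<in>M. m \<noteq> m' \<and> c m = c m' \<longrightarrow> (\<forall>x\<in>X. h m x * h m' x = 0)"
    by simp_all
  have inj: "inj_on c (F \<inter> M)" if F: "F \<in> nerve_cx S h X" for F
  proof
    fix a b assume ab: "a \<in> F \<inter> M" "b \<in> F \<inter> M" "c a = c b"
    show "a = b"
    proof (rule ccontr)
      assume "a \<noteq> b"
      have "card F = 1 \<or> finite F"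
        using F ab unfolding nerve_cx_def by blast
      then have "finite F"
        using card_ge_0_finite by force
      moreover have "{a, b} \<subseteq> F"
        using ab by blast
      ultimately have "2 \<le> card F"
        using card_mono[of F "{a, b}"] \<open>a \<noteq> b\<close> by simp
      with F obtain x where x: "x \<in> X" "\<forall>\<sigma>\<in>F. h \<sigma> x \<noteq> 0"
        by (rule nerve_cx_witness)
      have "h a x * h b x = 0"
        using orth[rule_format, of a b x] ab \<open>a \<noteq> b\<close> x(1) by simp
      moreover have "h a x \<noteq> 0" "h b x \<noteq> 0"
        using x(2) ab by auto
      ultimately show False
        by simp
    qed
  qed
  with c_le show ?thesis
    by (intro that) auto
qed

theorem proposition5p3:
  fixes \<Sigma>1 \<Sigma>2 :: "'a set" and star :: 'a and n :: nat
    and X :: "'x::t2_space set" and h :: "'a \<Rightarrow> 'x \<Rightarrow> real"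
  defines "\<Sigma> \<equiv> \<Sigma>1 \<union> \<Sigma>2"
  defines "\<Sigma>p \<equiv> insert star (\<Sigma>1 \<union> \<Sigma>2)"
  defines "K \<equiv> nerve_cx (insert star (\<Sigma>1 \<union> \<Sigma>2)) h X"
  defines "J \<equiv> {F \<in> nerve_cx (insert star (\<Sigma>1 \<union> \<Sigma>2)) h X. F \<subseteq> \<Sigma>1}"
  assumes fin: "finite \<Sigma>1" "finite \<Sigma>2"
    and disj: "\<Sigma>1 \<inter> \<Sigma>2 = {}" and star_notin: "star \<notin> \<Sigma>1 \<union> \<Sigma>2"
    and X_compact: "compact X"
    and h_cont: "\<And>\<sigma>. \<sigma> \<in> \<Sigma>p \<Longrightarrow> continuous_on X (h \<sigma>)"
    and h_pos: "\<And>\<sigma> x. \<sigma> \<in> \<Sigma>p \<Longrightarrow> x \<in> X \<Longrightarrow> 0 \<le> h \<sigma> x"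
    and h_gen: "\<And>x y. x \<in> X \<Longrightarrow> y \<in> X \<Longrightarrow> x \<noteq> y \<Longrightarrow> \<exists>\<sigma>\<in>\<Sigma>p. h \<sigma> x \<noteq> h \<sigma> y"
    and h_unital: "\<And>x. x \<in> X \<Longrightarrow> (\<Sum>\<sigma>\<in>\<Sigma>p. h \<sigma> x) = 1"
    and h_dim: "\<And>F x. F \<subseteq> \<Sigma> \<Longrightarrow> card F = n + 2 \<Longrightarrow> x \<in> X \<Longrightarrow> (\<Prod>\<sigma>\<in>F. h \<sigma> x) = 0"
    and h_dec: "n_decomposable n \<Sigma>1 h X"
  shows "\<exists>(\<Gamma> :: 'a set set) (L :: 'a set set set).
     fin_simplicial_complex \<Gamma> L
     \<comment> \<open>(i)\<close>
     \<and> (\<lambda>\<sigma>. {\<sigma>}) ` \<Sigma>p \<subseteq> \<Gamma> \<and> \<Gamma> \<subseteq> K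
     \<and> (\<forall>\<gamma>\<in>\<Gamma> - (\<lambda>\<sigma>. {\<sigma>}) ` \<Sigma>p. \<gamma> \<inter> \<Sigma>2 \<noteq> {})
     \<comment> \<open>(ii)\<close>
     \<and> (\<exists>g. homeomorphism (georeal \<Gamma> L) (georeal \<Sigma>p K) (lin_ext \<Gamma> barycenter) g)
     \<comment> \<open>(iii)\<close>
     \<and> {F \<in> L. F \<subseteq> (\<lambda>\<sigma>. {\<sigma>}) ` \<Sigma>1} = (\<lambda>G. (\<lambda>\<sigma>. {\<sigma>}) ` G) ` J
     \<comment> \<open>(iv)\<close>
     \<and> n_decomposable n (\<Gamma> - {{star}}) (\<lambda>\<gamma> t. t \<gamma>) (georeal \<Gamma> L)
     \<and> (\<forall>t\<in>georeal \<Gamma> L. (\<forall>\<gamma>. t \<gamma> \<noteq> 0 \<longrightarrow> \<gamma> \<in> (\<lambda>\<sigma>. {\<sigma>}) ` \<Sigma>1) \<longrightarrow>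
           (\<forall>\<sigma>\<in>\<Sigma>1. t {\<sigma>} = lin_ext \<Gamma> barycenter t \<sigma>))
     \<and> (\<forall>t\<in>georeal \<Gamma> L. (\<Sum>\<gamma>\<in>\<Gamma> - {{star}}. t \<gamma>) = (\<Sum>\<sigma>\<in>\<Sigma>. lin_ext \<Gamma> barycenter t \<sigma>))"
proof -
  obtain c where c_le: "\<forall>m\<in>\<Sigma>1. c m \<le> n" and c_inj: "\<forall>F\<in>K. inj_on c (F \<inter> \<Sigma>1)"
    using h_dec unfolding K_def by (rule n_decomposable_colouring_nerve_cx)
  interpret coloured_complex \<Sigma>1 \<Sigma>2 star n K c
  proof
    show "fin_simplicial_complex (insert star (\<Sigma>1 \<union> \<Sigma>2)) K"
      unfolding K_def using fin by (intro fin_simplicial_complex_nerve_cx) simp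
    show "card F \<le> Suc n" if "F \<in> K" "F \<subseteq> \<Sigma>1 \<union> \<Sigma>2" for F
      using h_dim that unfolding K_def \<Sigma>_def by (rule card_nerve_cx_le)
  qed (use disj star_notin c_le c_inj in auto)
  have J: "J = {G \<in> K. G \<subseteq> \<Sigma>1}"
    unfolding J_def K_def ..
  obtain g where g: "homeomorphism (georeal sd_vertices sd_complex) (georeal (insert star (\<Sigma>1 \<union> \<Sigma>2)) K) bary g"
    using homeomorphism_bary by blast
  show ?thesis
    unfolding \<Sigma>p_def \<Sigma>_def J
    by (intro exI[of _ sd_vertices] exI[of _ sd_complex] exI[of _ g] conjI
        fin_simplicial_complex_sd singletons_subset_sd_vertices sd_vertices_subset_K g
        new_vertex_meets_Sigma2 sd_complex_restrict_Sigma1 n_decomposable_sd)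
      (auto intro: bary_eq_on_Sigma1 simp: sum_bary_Sigma)
qed

end
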